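(* Let $n\ge1$, $1\le i\le n$ be integers, $\alpha,\beta>0$, $\tau\ge0$ with $i\beta(\tau+1)>\tau$. Put $a=\frac{(n-i+1)\tau\beta+(n-i+1)\beta+\tau}{\beta}$ and $b=\frac{i\tau\beta+i\beta-\tau}{\beta}$. Then $$\xi^{(i)}_\tau(\beta)=\int_0^\infty\frac{\partial}{\partial\beta}\log f^{(i)}_{\alpha,\beta}(x)\, f^{(i)}_{\alpha,\beta}(x)^{\tau+1}dx=\left(\frac{\beta}{\alpha}\right)^{\tau}\frac{c(i,n)^{\tau+1}}{\beta}B(a,b)\,\frac{\tau}{1+\tau}\left[\frac1\beta\big(\Psi(b)-\Psi(a)\big)+1\right],$$ and $K^{(i)}_\tau(\beta)=J^{(i)}_{2\tau}(\beta)-\xi^{(i)}_\tau(\beta)^2$.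
   Context: $c(i,n)=\frac{n!}{(n-i)!(i-1)!}$ and $f^{(i)}_{\alpha,\beta}(x)=\frac{c(i,n)\beta (x/\alpha)^{i\beta-1}}{\alpha(1+(x/\alpha)^\beta)^{n+1}}$, $x>0$, is the density of the $i$-th order statistic of a sample of size $n$ from the log-logistic distribution with scale $\alpha$ and shape $\beta$. Derivatives are with respect to $\beta$ with $\alpha$ known; $J^{(i)}_\tau(\beta)=\int_0^\infty(\partial_\beta\log f^{(i)}_{\alpha,\beta})^2(f^{(i)}_{\alpha,\beta})^{\tau+1}dx$, and $K^{(i)}_\tau(\beta)$ denotes $J^{(i)}_{2\tau}(\beta)-\xi^{(i)}_\tau(\beta)^2$. $B$ is the Beta function and $\Psi$ the digamma function. *)

theory Defs
  imports "HOL-Analysis.Analysis"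
begin

definition cc :: "nat \<Rightarrow> nat \<Rightarrow> real" where
  "cc i n = fact n / (fact (n - i) * fact (i - 1))"

text \<open>Density of the i-th order statistic of a size-n log-logistic sample
  (scale alpha, shape beta), for x > 0.\<close>
definition fos :: "nat \<Rightarrow> nat \<Rightarrow> real \<Rightarrow> real \<Rightarrow> real \<Rightarrow> real" where
  "fos i n \<alpha> \<beta> x =
     cc i n * \<beta> * (x / \<alpha>) powr (real i * \<beta> - 1)
       / (\<alpha> * (1 + (x / \<alpha>) powr \<beta>) ^ (n + 1))"

definition score :: "nat \<Rightarrow> nat \<Rightarrow> real \<Rightarrow> real \<Rightarrow> real \<Rightarrow> real" where
  "score i n \<alpha> \<beta> x = deriv (\<lambda>b. ln (fos i n \<alpha> b x)) \<beta>"

definition xi :: "nat \<Rightarrow> nat \<Rightarrow> real \<Rightarrow> real \<Rightarrow> real \<Rightarrow> real" where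
  "xi i n \<alpha> \<tau> \<beta> =
     integral {0<..} (\<lambda>x. score i n \<alpha> \<beta> x * fos i n \<alpha> \<beta> x powr (\<tau> + 1))"

definition J :: "nat \<Rightarrow> nat \<Rightarrow> real \<Rightarrow> real \<Rightarrow> real \<Rightarrow> real" where
  "J i n \<alpha> \<tau> \<beta> =
     integral {0<..} (\<lambda>x. (score i n \<alpha> \<beta> x)\<^sup>2 * fos i n \<alpha> \<beta> x powr (\<tau> + 1))"

definition K :: "nat \<Rightarrow> nat \<Rightarrow> real \<Rightarrow> real \<Rightarrow> real \<Rightarrow> real" where
  "K i n \<alpha> \<tau> \<beta> = J i n \<alpha> (2 * \<tau>) \<beta> - (xi i n \<alpha> \<tau> \<beta>)\<^sup>2"

end

(*
  The substitution x = alpha (t / (1 - t)) ^ (1 / beta), i.e. x is the log-logistic quantile of t,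
  turns f(x) ^ (tau + 1) dx into a constant multiple of the Beta kernel
  t ^ (b - 1) (1 - t) ^ (a - 1) dt, and the score into (1 + (i - (n + 1) t) logit t) / beta,
  where logit t = ln t - ln (1 - t).  Differentiating B(s, q) in s under the integral sign
  gives the integral of ln t against the Beta kernel, the reflection t -> 1 - t that of
  ln (1 - t), so logit t integrates to B(p, q) (Psi p - Psi q).  The extra factor t is absorbed
  by B(b + 1, a) = b / (a + b) B(b, a) and Psi (b + 1) = Psi b + 1 / b, and since
  a + b = (n + 1) (tau + 1) the weights collapse to the stated closed form.
*)

theory Submission
  imports Defs
begin

lemma has_real_derivative_integral_dominated:
  fixes g g' :: "real \<Rightarrow> real \<Rightarrow> real" and h :: "real \<Rightarrow> real" and S :: "real set"
  assumes "\<delta> > 0"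
    and deriv: "\<And>s x. \<bar>s - p\<bar> < \<delta> \<Longrightarrow> x \<in> S \<Longrightarrow> ((\<lambda>s. g s x) has_real_derivative g' s x) (at s)"
    and integrable: "\<And>s. \<bar>s - p\<bar> < \<delta> \<Longrightarrow> g s integrable_on S"
    and dominated: "\<And>s x. \<bar>s - p\<bar> < \<delta> \<Longrightarrow> x \<in> S \<Longrightarrow> \<bar>g' s x\<bar> \<le> h x"
    and "h integrable_on S"
  shows "g' p integrable_on S"
    and "((\<lambda>s. integral S (g s)) has_real_derivative integral S (g' p)) (at p)"
proof -
  have quotient_bound: "\<bar>(g (p + t) x - g p x) / t\<bar> \<le> h x"
    if "\<bar>t\<bar> < \<delta>" "t \<noteq> 0" "x \<in> S" for t x
  proof -
    have "norm ((\<lambda>s. g s x) (p + t) - (\<lambda>s. g s x) p) \<le> h x * norm (p + t - p)"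
    proof (rule field_differentiable_bound[where S="ball p \<delta>"])
      fix s
      assume "s \<in> ball p \<delta>"
      then have "\<bar>s - p\<bar> < \<delta>" by (simp add: dist_real_def abs_minus_commute)
      then show "((\<lambda>s. g s x) has_field_derivative g' s x) (at s within ball p \<delta>)"
        and "norm (g' s x) \<le> h x"
        using deriv dominated \<open>x \<in> S\<close> by (auto intro: has_field_derivative_at_within)
    qed (use that \<open>\<delta> > 0\<close> in \<open>auto simp: dist_real_def\<close>)
    with that show ?thesis by (simp add: abs_divide divide_le_eq)
  qed
  have difference_quotients:
    "(\<lambda>k. (integral S (g (p + X k)) - integral S (g p)) / X k) \<longlonglongrightarrow> integral S (g' p)
     \<and> g' p integrable_on S"
    if X: "X \<longlonglongrightarrow> 0" "\<And>k. X k \<noteq> 0" for X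
  proof -
    obtain N where N: "\<And>k. k \<ge> N \<Longrightarrow> \<bar>X k\<bar> < \<delta>"
      using X(1) \<open>\<delta> > 0\<close> unfolding LIMSEQ_def dist_real_def by fastforce
    define Y where "Y k = X (k + N)" for k
    have "Y \<longlonglongrightarrow> 0" unfolding Y_def using X(1) by (rule LIMSEQ_ignore_initial_segment)
    have Y: "\<bar>Y k\<bar> < \<delta>" "Y k \<noteq> 0" for k unfolding Y_def using N X(2) by auto
    define q where "q k x = (g (p + Y k) x - g p x) / Y k" for k x
    have "q k integrable_on S" for k
      unfolding q_def using Y \<open>\<delta> > 0\<close> by (intro integrable_on_divide integrable_diff integrable) auto
    moreover have "norm (q k x) \<le> h x" if "x \<in> S" for k x
      unfolding q_def real_norm_def using quotient_bound[OF Y that] .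
    moreover have "(\<lambda>k. q k x) \<longlonglongrightarrow> g' p x" if "x \<in> S" for x
    proof -
      have "((\<lambda>t. (g (p + t) x - g p x) / t) \<longlongrightarrow> g' p x) (at 0)"
        using deriv[of p x] \<open>\<delta> > 0\<close> that by (simp add: DERIV_def)
      moreover have "filterlim Y (at 0) sequentially"
        using \<open>Y \<longlonglongrightarrow> 0\<close> Y(2) by (intro filterlim_atI) auto
      ultimately show ?thesis unfolding q_def by (rule filterlim_compose)
    qed
    ultimately have "g' p integrable_on S" "(\<lambda>k. integral S (q k)) \<longlonglongrightarrow> integral S (g' p)"
      using dominated_convergence[of q S h "g' p"] \<open>h integrable_on S\<close> by auto
    moreover have "integral S (q k) = (integral S (g (p + Y k)) - integral S (g p)) / Y k" for k
      unfolding q_def using Y \<open>\<delta> > 0\<close> by (simp add: integral_diff integrable)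
    ultimately show ?thesis
      using LIMSEQ_offset[where f="\<lambda>k. (integral S (g (p + X k)) - integral S (g p)) / X k" and k=N]
      unfolding Y_def by auto
  qed
  show "g' p integrable_on S"
    using difference_quotients[of "\<lambda>k. 1 / Suc k"] LIMSEQ_inverse_real_of_nat
    by (simp add: inverse_eq_divide)
  show "((\<lambda>s. integral S (g s)) has_real_derivative integral S (g' p)) (at p)"
    unfolding DERIV_def tendsto_at_iff_sequentially
    using difference_quotients by (auto simp: o_def)
qed

lemma abs_ln_le_powr:
  fixes t e :: real
  assumes "0 < t" "t < 1" "e > 0"
  shows "\<bar>ln t\<bar> \<le> t powr (- e) / e"
proof -
  have "ln (t powr (- e)) \<le> t powr (- e) - 1"
    using ln_le_minus_one[of "t powr (- e)"] assms by simp
  with assms show ?thesis by (simp add: field_simps)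
qed

lemma has_integral_Beta_ln:
  fixes p q :: real
  assumes "p > 0" and "q > 0"
  shows "(\<lambda>t. t powr (p - 1) * (1 - t) powr (q - 1) * ln t) absolutely_integrable_on {0<..<1}"
    and "((\<lambda>t. t powr (p - 1) * (1 - t) powr (q - 1) * ln t) has_integral
           Beta p q * (Digamma p - Digamma (p + q))) {0<..<1}"
proof -
  define g where "g s t = t powr (s - 1) * (1 - t) powr (q - 1)" for s t :: real
  define g' where "g' s t = t powr (s - 1) * (1 - t) powr (q - 1) * ln t" for s t :: real
  \<comment> \<open>dominates the derivative in s for \<open>\<bar>s - p\<bar> < p / 2\<close>, via \<open>abs_ln_le_powr\<close> with exponent p/4\<close>
  define h where "h t = 4 / p * (t powr (p / 4 - 1) * (1 - t) powr (q - 1))" for t :: real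
  have h: "h integrable_on {0<..<1}"
    unfolding h_def using integrable_Beta'[of "p / 4" q] assms
    by (intro integrable_on_mult_right) (auto simp: integrable_on_Icc_iff_Ioo)
  have g_Beta: "(g s has_integral Beta s q) {0<..<1}" if "s > 0" for s
    using has_integral_Beta_real[of s q] that \<open>q > 0\<close>
    unfolding g_def by (simp add: has_integral_Icc_iff_Ioo)
  have deriv: "((\<lambda>s. g s t) has_real_derivative g' s t) (at s)" if "t \<in> {0<..<1}" for s t
    unfolding g_def g'_def using that by (auto intro!: derivative_eq_intros simp: powr_def)
  have dominated: "\<bar>g' s t\<bar> \<le> h t" if "\<bar>s - p\<bar> < p / 2" "t \<in> {0<..<1}" for s t
  proof -
    have t: "0 < t" "t < 1" using that by auto
    have "p / 2 - 1 \<le> s - 1" using that(1) by linarith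
    have "\<bar>g' s t\<bar> = t powr (s - 1) * \<bar>ln t\<bar> * (1 - t) powr (q - 1)"
      unfolding g'_def by (simp add: abs_mult)
    also have "\<dots> \<le> t powr (p / 2 - 1) * (t powr (- (p / 4)) / (p / 4)) * (1 - t) powr (q - 1)"
      using \<open>p / 2 - 1 \<le> s - 1\<close> t \<open>p > 0\<close> by (intro mult_right_mono mult_mono powr_mono' abs_ln_le_powr) auto
    also have "\<dots> = h t"
    proof -
      have "t powr (p / 2 - 1) * t powr (- (p / 4)) = t powr (p / 4 - 1)"
        unfolding powr_add [symmetric] by (intro arg_cong[where f="(powr) t"]) linarith
      then show ?thesis unfolding h_def by (simp add: field_simps)
    qed
    finally show ?thesis .
  qed
  have g_integrable: "g s integrable_on {0<..<1}" if "\<bar>s - p\<bar> < p / 2" for s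
  proof -
    have "s > 0" using that by linarith
    then show ?thesis using g_Beta by blast
  qed
  have "p / 2 > 0" using \<open>p > 0\<close> by simp
  note Leibniz = has_real_derivative_integral_dominated[OF this deriv g_integrable dominated h]
  have "((\<lambda>s. Beta s q) has_real_derivative Beta p q * (Digamma p - Digamma (p + q))) (at p)"
    using assms by (intro has_field_derivative_Beta1) (auto elim!: nonpos_Ints_cases)
  moreover have "((\<lambda>s. Beta s q) has_real_derivative integral {0<..<1} (g' p)) (at p)"
    using g_Beta \<open>p > 0\<close>
    by (intro has_field_derivative_transform_within_open[OF Leibniz(2), where S="{0<..}"])
       (auto simp: integral_unique)
  ultimately have "integral {0<..<1} (g' p) = Beta p q * (Digamma p - Digamma (p + q))"
    by (metis DERIV_unique)
  with Leibniz(1) show "(g' p has_integral Beta p q * (Digamma p - Digamma (p + q))) {0<..<1}"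
    by (metis has_integral_integral)
  show "g' p absolutely_integrable_on {0<..<1}"
    using dominated \<open>p > 0\<close> by (intro absolutely_integrable_integrable_bound[OF _ Leibniz(1) h]) auto
qed

lemma has_integral_Beta_ln_one_minus:
  fixes p q :: real
  assumes "p > 0" and "q > 0"
  shows "(\<lambda>t. t powr (p - 1) * (1 - t) powr (q - 1) * ln (1 - t)) absolutely_integrable_on {0<..<1}"
    and "((\<lambda>t. t powr (p - 1) * (1 - t) powr (q - 1) * ln (1 - t)) has_integral
           Beta p q * (Digamma q - Digamma (p + q))) {0<..<1}"
proof -
  define f where "f t = t powr (p - 1) * (1 - t) powr (q - 1) * ln (1 - t)" for t :: real
  have reflect: "(\<lambda>t. 1 - t) ` {0<..<1} = {0<..<1::real}"
    by (auto simp: image_iff intro!: bexI[where x="1 - x" for x])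
  have "(\<lambda>t. \<bar>- 1\<bar> * f (1 - t)) = (\<lambda>t. t powr (q - 1) * (1 - t) powr (p - 1) * ln t)"
    by (auto simp: f_def fun_eq_iff)
  then have "(\<lambda>t. \<bar>- 1\<bar> * f (1 - t)) absolutely_integrable_on {0<..<1}
      \<and> integral {0<..<1} (\<lambda>t. \<bar>- 1\<bar> * f (1 - t)) = Beta p q * (Digamma q - Digamma (p + q))"
    using has_integral_Beta_ln[OF \<open>q > 0\<close> \<open>p > 0\<close>]
    by (simp add: integral_unique Beta_commute add.commute)
  moreover have "((\<lambda>t. 1 - t) has_real_derivative - 1) (at t within {0<..<1})" for t :: real
    by (auto intro!: derivative_eq_intros)
  ultimately have "f absolutely_integrable_on (\<lambda>t. 1 - t) ` {0<..<1}
      \<and> integral ((\<lambda>t. 1 - t) ` {0<..<1}) f = Beta p q * (Digamma q - Digamma (p + q))"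
    by (subst has_absolute_integral_change_of_variables_1' [symmetric]) (auto simp: inj_on_def)
  then show "f absolutely_integrable_on {0<..<1}"
    and "(f has_integral Beta p q * (Digamma q - Digamma (p + q))) {0<..<1}"
    unfolding reflect has_integral_integrable_integral
    using set_lebesgue_integral_eq_integral(1) by blast+
qed

lemma has_integral_Beta_logit:
  fixes p q :: real
  assumes "p > 0" and "q > 0"
  shows "(\<lambda>t. t powr (p - 1) * (1 - t) powr (q - 1) * (ln t - ln (1 - t)))
           absolutely_integrable_on {0<..<1}"
    and "((\<lambda>t. t powr (p - 1) * (1 - t) powr (q - 1) * (ln t - ln (1 - t))) has_integral
           Beta p q * (Digamma p - Digamma q)) {0<..<1}"
  using set_integral_diff(1)[OF has_integral_Beta_ln(1) has_integral_Beta_ln_one_minus(1), OF assms assms]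
    has_integral_diff[OF has_integral_Beta_ln(2) has_integral_Beta_ln_one_minus(2), OF assms assms]
  by (simp_all add: algebra_simps)

lemma Beta_Digamma_plus1_left:
  fixes p q :: real
  assumes "p > 0" "q > 0"
  shows "Beta (p + 1) q * (Digamma (p + 1) - Digamma q)
           = Beta p q * (p * (Digamma p - Digamma q) + 1) / (p + q)"
proof -
  have "p \<notin> \<int>\<^sub>\<le>\<^sub>0" using \<open>p > 0\<close> by (auto elim!: nonpos_Ints_cases)
  then have Beta_succ: "Beta (p + 1) q = p / (p + q) * Beta p q"
    and Digamma_succ: "Digamma (p + 1) = Digamma p + 1 / p"
    using Beta_plus1_left[of p q] Digamma_plus1[of p] assms by (simp_all add: field_simps)
  show ?thesis
    unfolding Beta_succ Digamma_succ using assms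
    by (simp add: divide_simps) (simp add: algebra_simps)
qed

lemma has_integral_Beta_logit_affine:
  fixes p q u v :: real
  assumes "p > 0" and "q > 0"
  shows "(\<lambda>t. t powr (p - 1) * (1 - t) powr (q - 1) * (1 + (u - v * t) * (ln t - ln (1 - t))))
           absolutely_integrable_on {0<..<1}"
    and "((\<lambda>t. t powr (p - 1) * (1 - t) powr (q - 1) * (1 + (u - v * t) * (ln t - ln (1 - t))))
           has_integral Beta p q * (1 - v / (p + q) + (u - v * p / (p + q)) * (Digamma p - Digamma q)))
         {0<..<1}"
proof -
  define B where "B p' = (\<lambda>t. t powr (p' - 1) * (1 - t) powr (q - 1))" for p' :: real
  define L where "L p' t = B p' t * (ln t - ln (1 - t))" for p' t :: real
  have "p + 1 > 0" using \<open>p > 0\<close> by simp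
  have split: "t powr (p - 1) * (1 - t) powr (q - 1) * (1 + (u - v * t) * (ln t - ln (1 - t)))
      = B p t + u * L p t - v * L (p + 1) t" if "t \<in> {0<..<1}" for t
  proof -
    have "t powr (p + 1 - 1) = t * t powr (p - 1)"
      using that by (simp add: powr_mult_base)
    then show ?thesis by (simp add: B_def L_def algebra_simps)
  qed
  have B: "(B p has_integral Beta p q) {0<..<1}"
    using has_integral_Beta_real[OF assms] by (simp add: B_def has_integral_Icc_iff_Ioo)
  then have "B p absolutely_integrable_on {0<..<1}"
    by (subst absolutely_integrable_on_iff_nonneg) (auto simp: B_def integrable_on_def)
  then have "(\<lambda>t. B p t + u * L p t - v * L (p + 1) t) absolutely_integrable_on {0<..<1}"
    using has_integral_Beta_logit(1)[OF \<open>p > 0\<close> \<open>q > 0\<close>]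
      has_integral_Beta_logit(1)[OF \<open>p + 1 > 0\<close> \<open>q > 0\<close>]
    unfolding L_def B_def by (intro set_integral_diff(1) set_integral_add(1) set_integrable_mult_right)
  then show "(\<lambda>t. t powr (p - 1) * (1 - t) powr (q - 1) * (1 + (u - v * t) * (ln t - ln (1 - t))))
      absolutely_integrable_on {0<..<1}"
    using split by (subst set_integrable_cong[OF refl refl]) auto
  have closed_form: "Beta p q + u * (Beta p q * (Digamma p - Digamma q))
        - v * (Beta (p + 1) q * (Digamma (p + 1) - Digamma q))
      = Beta p q * (1 - v / (p + q) + (u - v * p / (p + q)) * (Digamma p - Digamma q))"
    unfolding Beta_Digamma_plus1_left[OF assms] using assms
    by (simp add: divide_simps) (simp add: algebra_simps)
  have "((\<lambda>t. B p t + u * L p t - v * L (p + 1) t) has_integral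
      Beta p q + u * (Beta p q * (Digamma p - Digamma q))
        - v * (Beta (p + 1) q * (Digamma (p + 1) - Digamma q))) {0<..<1}"
    using has_integral_Beta_logit(2)[OF \<open>p > 0\<close> \<open>q > 0\<close>]
      has_integral_Beta_logit(2)[OF \<open>p + 1 > 0\<close> \<open>q > 0\<close>]
    unfolding L_def B_def
    by (intro has_integral_diff has_integral_add has_integral_mult_right B[unfolded B_def])
  then show "((\<lambda>t. t powr (p - 1) * (1 - t) powr (q - 1) * (1 + (u - v * t) * (ln t - ln (1 - t))))
      has_integral Beta p q * (1 - v / (p + q) + (u - v * p / (p + q)) * (Digamma p - Digamma q)))
      {0<..<1}"
    unfolding closed_form using split by (subst has_integral_cong) auto
qed

(* the inverse of the log-logistic distribution function x \<mapsto> (x/\<alpha>)^\<beta> / (1 + (x/\<alpha>)^\<beta>) *)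
definition loglogistic_quantile :: "real \<Rightarrow> real \<Rightarrow> real \<Rightarrow> real" where
  "loglogistic_quantile \<alpha> \<beta> t = \<alpha> * (t / (1 - t)) powr (1 / \<beta>)"

lemma loglogistic_quantile_pos:
  "\<alpha> > 0 \<Longrightarrow> 0 < t \<Longrightarrow> t < 1 \<Longrightarrow> loglogistic_quantile \<alpha> \<beta> t > 0"
  unfolding loglogistic_quantile_def by simp

lemma powr_loglogistic_quantile:
  assumes "\<alpha> > 0" "\<beta> > 0" "0 < t" "t < 1"
  shows "(loglogistic_quantile \<alpha> \<beta> t / \<alpha>) powr \<beta> = t / (1 - t)"
  using assms by (simp add: loglogistic_quantile_def powr_powr)

lemma ln_loglogistic_quantile:
  assumes "\<alpha> > 0" "0 < t" "t < 1"
  shows "ln (loglogistic_quantile \<alpha> \<beta> t / \<alpha>) = (ln t - ln (1 - t)) / \<beta>"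
  using assms by (simp add: loglogistic_quantile_def ln_div)

lemma bij_betw_loglogistic_quantile:
  assumes "\<alpha> > 0" "\<beta> > 0"
  shows "bij_betw (loglogistic_quantile \<alpha> \<beta>) {0<..<1} {0<..}"
proof (rule bij_betw_imageI)
  show "inj_on (loglogistic_quantile \<alpha> \<beta>) {0<..<1}"
  proof (rule inj_onI)
    fix s t :: real
    assume "s \<in> {0<..<1}" "t \<in> {0<..<1}"
      and "loglogistic_quantile \<alpha> \<beta> s = loglogistic_quantile \<alpha> \<beta> t"
    then have "0 < s" "s < 1" "0 < t" "t < 1" "s / (1 - s) = t / (1 - t)"
      using powr_loglogistic_quantile[OF assms, of s] powr_loglogistic_quantile[OF assms, of t]
      by auto
    then show "s = t" by (simp add: field_simps)
  qed
  show "loglogistic_quantile \<alpha> \<beta> ` {0<..<1} = {0<..}"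
  proof (intro equalityI subsetI)
    fix x :: real
    assume "x \<in> {0<..}"
    define r where "r = (x / \<alpha>) powr \<beta>"
    have "r > 0" using \<open>x \<in> {0<..}\<close> assms by (simp add: r_def)
    then have "r / (1 + r) \<in> {0<..<1}" and r: "r / (1 + r) / (1 - r / (1 + r)) = r"
      by (simp_all add: divide_simps)
    moreover have "loglogistic_quantile \<alpha> \<beta> (r / (1 + r)) = x"
      unfolding loglogistic_quantile_def r
      using \<open>x \<in> {0<..}\<close> assms by (simp add: r_def powr_powr)
    ultimately show "x \<in> loglogistic_quantile \<alpha> \<beta> ` {0<..<1}"
      by (metis image_eqI)
  next
    fix x
    assume "x \<in> loglogistic_quantile \<alpha> \<beta> ` {0<..<1}"
    then show "x \<in> {0<..}" using assms(1) loglogistic_quantile_pos by auto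
  qed
qed

lemma loglogistic_quantile_has_real_derivative:
  assumes "\<beta> > 0" "0 < t" "t < 1"
  shows "(loglogistic_quantile \<alpha> \<beta> has_real_derivative
           loglogistic_quantile \<alpha> \<beta> t / (\<beta> * t * (1 - t))) (at t)"
proof -
  have "(t / (1 - t)) powr (1 / \<beta> - 1) = (t / (1 - t)) powr (1 / \<beta>) * (1 - t) / t"
    using assms by (simp add: powr_diff)
  with assms show ?thesis
    unfolding loglogistic_quantile_def [abs_def]
    by (auto intro!: derivative_eq_intros) (simp add: field_simps)
qed

lemma has_integral_loglogistic_substitution:
  fixes f :: "real \<Rightarrow> real"
  assumes "\<alpha> > 0" "\<beta> > 0"
    and "(\<lambda>t. loglogistic_quantile \<alpha> \<beta> t / (\<beta> * t * (1 - t)) * f (loglogistic_quantile \<alpha> \<beta> t))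
           absolutely_integrable_on {0<..<1}"
    and "((\<lambda>t. loglogistic_quantile \<alpha> \<beta> t / (\<beta> * t * (1 - t)) * f (loglogistic_quantile \<alpha> \<beta> t))
           has_integral I) {0<..<1}"
  shows "(f has_integral I) {0<..}"
proof -
  let ?Q = "loglogistic_quantile \<alpha> \<beta>"
  let ?Q' = "\<lambda>t. loglogistic_quantile \<alpha> \<beta> t / (\<beta> * t * (1 - t))"
  have abs_eq: "\<bar>?Q' t\<bar> * f (?Q t) = ?Q' t * f (?Q t)" if "t \<in> {0<..<1}" for t
  proof -
    have "?Q t > 0" using that \<open>\<alpha> > 0\<close> by (simp add: loglogistic_quantile_pos)
    then have "?Q' t > 0" using that \<open>\<beta> > 0\<close> by simp
    then show ?thesis by (simp only: abs_of_pos)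
  qed
  have "(\<lambda>t. \<bar>?Q' t\<bar> * f (?Q t)) absolutely_integrable_on {0<..<1}"
    using assms(3) by (subst set_integrable_cong[OF refl refl abs_eq])
  moreover have "integral {0<..<1} (\<lambda>t. \<bar>?Q' t\<bar> * f (?Q t))
      = integral {0<..<1} (\<lambda>t. ?Q' t * f (?Q t))"
    by (rule integral_cong) (rule abs_eq)
  then have "integral {0<..<1} (\<lambda>t. \<bar>?Q' t\<bar> * f (?Q t)) = I"
    using integral_unique[OF assms(4)] by simp
  moreover have "(?Q has_real_derivative ?Q' t) (at t within {0<..<1})" if "t \<in> {0<..<1}" for t
    using that \<open>\<beta> > 0\<close>
    by (intro has_field_derivative_at_within[OF loglogistic_quantile_has_real_derivative]) auto
  moreover have "inj_on ?Q {0<..<1}" and image: "?Q ` {0<..<1} = {0<..}"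
    using bij_betw_loglogistic_quantile[OF assms(1,2)] by (simp_all add: bij_betw_def)
  ultimately have "f absolutely_integrable_on ?Q ` {0<..<1} \<and> integral (?Q ` {0<..<1}) f = I"
    by (intro iffD1[OF has_absolute_integral_change_of_variables_1']) auto
  then show ?thesis
    unfolding image has_integral_integrable_integral
    using set_lebesgue_integral_eq_integral(1) by blast
qed

lemma cc_pos: "cc i n > 0"
  unfolding cc_def by simp

lemma fos_pos:
  assumes "\<alpha> > 0" "\<beta> > 0" "x > 0"
  shows "fos i n \<alpha> \<beta> x > 0"
  unfolding fos_def using assms cc_pos[of i n] by (simp add: add_pos_nonneg)

lemma ln_fos:
  assumes "\<alpha> > 0" "\<beta> > 0" "x > 0"
  shows "ln (fos i n \<alpha> \<beta> x) = ln (cc i n) + ln \<beta> - ln \<alpha> + (real i * \<beta> - 1) * ln (x / \<alpha>)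
           - real (n + 1) * ln (1 + (x / \<alpha>) powr \<beta>)"
proof -
  have "1 + (x / \<alpha>) powr \<beta> > 0" by (simp add: add_pos_nonneg)
  have "ln (fos i n \<alpha> \<beta> x) = ln (cc i n * \<beta> * (x / \<alpha>) powr (real i * \<beta> - 1))
      - ln (\<alpha> * (1 + (x / \<alpha>) powr \<beta>) ^ (n + 1))"
    unfolding fos_def using assms cc_pos[of i n] \<open>1 + (x / \<alpha>) powr \<beta> > 0\<close> by (simp add: ln_div)
  also have "ln (cc i n * \<beta> * (x / \<alpha>) powr (real i * \<beta> - 1))
      = ln (cc i n) + ln \<beta> + (real i * \<beta> - 1) * ln (x / \<alpha>)"
    using assms cc_pos[of i n] by (simp add: ln_mult)
  also have "ln (\<alpha> * (1 + (x / \<alpha>) powr \<beta>) ^ (n + 1))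
      = ln \<alpha> + real (n + 1) * ln (1 + (x / \<alpha>) powr \<beta>)"
    using assms \<open>1 + (x / \<alpha>) powr \<beta> > 0\<close> by (simp add: ln_mult ln_realpow) (simp add: algebra_simps)
  finally show ?thesis by simp
qed

lemma score_eq:
  assumes "\<alpha> > 0" "\<beta> > 0" "x > 0"
  shows "score i n \<alpha> \<beta> x
           = 1 / \<beta> + ln (x / \<alpha>) * (real i - real (n + 1) * ((x / \<alpha>) powr \<beta> / (1 + (x / \<alpha>) powr \<beta>)))"
proof -
  let ?L = "ln (x / \<alpha>)" and ?y = "\<lambda>b. (x / \<alpha>) powr b"
  have "((\<lambda>b. ln (cc i n) + ln b - ln \<alpha> + (real i * b - 1) * ?L - real (n + 1) * ln (1 + ?y b))
      has_real_derivative 1 / \<beta> + real i * ?L - real (n + 1) * (?y \<beta> * ?L / (1 + ?y \<beta>))) (at \<beta>)"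
    using assms by (auto intro!: derivative_eq_intros simp: add_pos_nonneg)
  then have "((\<lambda>b. ln (fos i n \<alpha> b x))
      has_real_derivative 1 / \<beta> + real i * ?L - real (n + 1) * (?y \<beta> * ?L / (1 + ?y \<beta>))) (at \<beta>)"
    by (rule has_field_derivative_transform_within_open[where S="{0<..}"])
       (use assms in \<open>auto simp: ln_fos\<close>)
  then show ?thesis
    unfolding score_def by (subst DERIV_imp_deriv) (auto simp: algebra_simps)
qed

lemma score_loglogistic_quantile:
  assumes "\<alpha> > 0" "\<beta> > 0" "0 < t" "t < 1"
  shows "score i n \<alpha> \<beta> (loglogistic_quantile \<alpha> \<beta> t)
           = (1 + (real i - real (n + 1) * t) * (ln t - ln (1 - t))) / \<beta>"
proof -
  have "t / (1 - t) / (1 + t / (1 - t)) = t"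
    using assms by (simp add: divide_simps)
  then show ?thesis
    using assms
    by (simp add: score_eq loglogistic_quantile_pos powr_loglogistic_quantile
        ln_loglogistic_quantile field_simps)
qed

lemma loglogistic_quantile_jacobian_fos_powr:
  assumes "\<alpha> > 0" "\<beta> > 0" "0 < t" "t < 1"
    and "a = (real n + 1 - real i) * (\<tau> + 1) + \<tau> / \<beta>"
    and "b = real i * (\<tau> + 1) - \<tau> / \<beta>"
  shows "loglogistic_quantile \<alpha> \<beta> t / (\<beta> * t * (1 - t)) * fos i n \<alpha> \<beta> (loglogistic_quantile \<alpha> \<beta> t) powr (\<tau> + 1)
           = (\<beta> / \<alpha>) powr \<tau> * cc i n powr (\<tau> + 1) * (t powr (b - 1) * (1 - t) powr (a - 1))"
    (is "?lhs = ?rhs")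
proof -
  define x where "x = loglogistic_quantile \<alpha> \<beta> t"
  have "x > 0" unfolding x_def using assms by (simp add: loglogistic_quantile_pos)
  have ln_x: "ln x = ln \<alpha> + (ln t - ln (1 - t)) / \<beta>"
    using ln_loglogistic_quantile[of \<alpha> t \<beta>] assms \<open>x > 0\<close> by (simp add: x_def ln_div)
  have "ln (1 + (x / \<alpha>) powr \<beta>) = - ln (1 - t)"
    unfolding x_def using assms by (simp add: powr_loglogistic_quantile divide_simps ln_div)
  then have ln_fos_x: "ln (fos i n \<alpha> \<beta> x) = ln (cc i n) + ln \<beta> - ln \<alpha>
      + (real i * \<beta> - 1) * ((ln t - ln (1 - t)) / \<beta>) + real (n + 1) * ln (1 - t)"
    using ln_fos[OF assms(1,2) \<open>x > 0\<close>, of i n] ln_loglogistic_quantile[of \<alpha> t \<beta>] assms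
    by (simp add: x_def)
  have "?lhs > 0"
    using assms \<open>x > 0\<close> fos_pos[OF assms(1,2) \<open>x > 0\<close>, of i n]
    by (simp add: x_def [symmetric])
  moreover have "?rhs > 0"
    using assms cc_pos[of i n] by simp
  moreover have "ln ?lhs = ln ?rhs"
  proof -
    have "ln ?lhs = ln x - ln \<beta> - ln t - ln (1 - t) + (\<tau> + 1) * ln (fos i n \<alpha> \<beta> x)"
      using assms \<open>x > 0\<close> fos_pos[OF assms(1,2) \<open>x > 0\<close>, of i n]
      by (simp add: x_def [symmetric] ln_mult ln_div)
    also have "\<dots> = \<tau> * (ln \<beta> - ln \<alpha>) + (\<tau> + 1) * ln (cc i n) + (b - 1) * ln t + (a - 1) * ln (1 - t)"
      unfolding ln_x ln_fos_x assms(5,6) using \<open>\<beta> > 0\<close> by (simp add: field_simps)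
    also have "\<dots> = ln ?rhs"
      using assms cc_pos[of i n] by (simp add: ln_mult ln_div)
    finally show ?thesis .
  qed
  ultimately show ?thesis by simp
qed

lemma loglogistic_quantile_jacobian_score_fos_powr:
  assumes "\<alpha> > 0" "\<beta> > 0" "0 < t" "t < 1"
    and "a = (real n + 1 - real i) * (\<tau> + 1) + \<tau> / \<beta>"
    and "b = real i * (\<tau> + 1) - \<tau> / \<beta>"
  shows "loglogistic_quantile \<alpha> \<beta> t / (\<beta> * t * (1 - t))
           * (score i n \<alpha> \<beta> (loglogistic_quantile \<alpha> \<beta> t)
              * fos i n \<alpha> \<beta> (loglogistic_quantile \<alpha> \<beta> t) powr (\<tau> + 1))
         = (\<beta> / \<alpha>) powr \<tau> * cc i n powr (\<tau> + 1) / \<beta>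
           * (t powr (b - 1) * (1 - t) powr (a - 1)
              * (1 + (real i - real (n + 1) * t) * (ln t - ln (1 - t))))"
proof -
  let ?Q = "loglogistic_quantile \<alpha> \<beta>"
  have "?Q t / (\<beta> * t * (1 - t)) * (score i n \<alpha> \<beta> (?Q t) * fos i n \<alpha> \<beta> (?Q t) powr (\<tau> + 1))
      = score i n \<alpha> \<beta> (?Q t) * (?Q t / (\<beta> * t * (1 - t)) * fos i n \<alpha> \<beta> (?Q t) powr (\<tau> + 1))"
    by (simp only: ac_simps)
  also have "\<dots> = (1 + (real i - real (n + 1) * t) * (ln t - ln (1 - t))) / \<beta>
      * ((\<beta> / \<alpha>) powr \<tau> * cc i n powr (\<tau> + 1) * (t powr (b - 1) * (1 - t) powr (a - 1)))"
    unfolding score_loglogistic_quantile[OF assms(1-4)]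
      loglogistic_quantile_jacobian_fos_powr[OF assms] ..
  finally show ?thesis
    by (simp add: ac_simps)
qed

lemma has_integral_score_fos_powr:
  assumes "\<alpha> > 0" "\<beta> > 0" "a > 0" "b > 0"
    and "a = (real n + 1 - real i) * (\<tau> + 1) + \<tau> / \<beta>"
    and "b = real i * (\<tau> + 1) - \<tau> / \<beta>"
  shows "((\<lambda>x. score i n \<alpha> \<beta> x * fos i n \<alpha> \<beta> x powr (\<tau> + 1)) has_integral
           (\<beta> / \<alpha>) powr \<tau> * cc i n powr (\<tau> + 1) / \<beta> * (Beta b a * (1 - real (n + 1) / (b + a)
             + (real i - real (n + 1) * b / (b + a)) * (Digamma b - Digamma a)))) {0<..}"
proof (rule has_integral_loglogistic_substitution[OF assms(1,2)])
  let ?h = "\<lambda>t. loglogistic_quantile \<alpha> \<beta> t / (\<beta> * t * (1 - t))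
                 * (score i n \<alpha> \<beta> (loglogistic_quantile \<alpha> \<beta> t)
                    * fos i n \<alpha> \<beta> (loglogistic_quantile \<alpha> \<beta> t) powr (\<tau> + 1))"
  let ?C = "(\<beta> / \<alpha>) powr \<tau> * cc i n powr (\<tau> + 1) / \<beta>"
  let ?g = "\<lambda>t. t powr (b - 1) * (1 - t) powr (a - 1)
                 * (1 + (real i - real (n + 1) * t) * (ln t - ln (1 - t)))"
  let ?I = "?C * (Beta b a * (1 - real (n + 1) / (b + a)
              + (real i - real (n + 1) * b / (b + a)) * (Digamma b - Digamma a)))"
  have substitute: "?h t = ?C * ?g t" if "t \<in> {0<..<1}" for t
    using that loglogistic_quantile_jacobian_score_fos_powr[OF assms(1,2) _ _ assms(5,6), of t]
    by simp
  note Beta_logit = has_integral_Beta_logit_affine[OF assms(4,3), of "real i" "real (n + 1)"]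
  have "(\<lambda>t. ?C * ?g t) absolutely_integrable_on {0<..<1}"
    by (intro set_integrable_mult_right Beta_logit(1))
  then show "?h absolutely_integrable_on {0<..<1}"
    by (simp only: set_integrable_cong[OF refl refl substitute])
  have "((\<lambda>t. ?C * ?g t) has_integral ?I) {0<..<1}"
    by (rule has_integral_mult_right[OF Beta_logit(2)])
  then show "(?h has_integral ?I) {0<..<1}"
    by (simp only: has_integral_cong[OF substitute])
qed

lemma Beta_logit_weights_eq:
  fixes m i \<beta> \<tau> a b :: real
  assumes "\<beta> > 0" "\<tau> \<ge> 0"
    and sum: "b + a = m * (\<tau> + 1)" and "m > 0"
    and b_eq: "b = i * (\<tau> + 1) - \<tau> / \<beta>"
  shows "Beta b a * (1 - m / (b + a) + (i - m * b / (b + a)) * (Digamma b - Digamma a))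
           = Beta a b * (\<tau> / (1 + \<tau>)) * (1 / \<beta> * (Digamma b - Digamma a) + 1)"
proof -
  have weight_1: "1 - m / (b + a) = \<tau> / (\<tau> + 1)"
    unfolding sum using assms by (simp add: diff_divide_distrib) (simp add: field_simps)
  have weight_Digamma: "i - m * b / (b + a) = \<tau> / (\<tau> + 1) / \<beta>"
    unfolding sum using assms by (simp add: b_eq diff_divide_distrib)
  define w where "w = \<tau> / (\<tau> + 1)"
  show ?thesis
    unfolding weight_1 weight_Digamma Beta_commute[of b a] add.commute[of 1 \<tau>] w_def [symmetric]
    by (simp add: algebra_simps)
qed

theorem theorem8:
  fixes n i :: nat and \<alpha> \<beta> \<tau> a b :: real
  assumes "1 \<le> n" and "1 \<le> i" and "i \<le> n"
    and "\<alpha> > 0" and "\<beta> > 0" and "\<tau> \<ge> 0"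
    and "real i * \<beta> * (\<tau> + 1) > \<tau>"
    and "a = (real (n - i + 1) * \<tau> * \<beta> + real (n - i + 1) * \<beta> + \<tau>) / \<beta>"
    and "b = (real i * \<tau> * \<beta> + real i * \<beta> - \<tau>) / \<beta>"
  shows "((\<lambda>x. score i n \<alpha> \<beta> x * fos i n \<alpha> \<beta> x powr (\<tau> + 1)) has_integral
            ((\<beta> / \<alpha>) powr \<tau> * cc i n powr (\<tau> + 1) / \<beta> * Beta a b * (\<tau> / (1 + \<tau>))
              * (1 / \<beta> * (Digamma b - Digamma a) + 1))) {0<..}
       \<and> xi i n \<alpha> \<tau> \<beta> = (\<beta> / \<alpha>) powr \<tau> * cc i n powr (\<tau> + 1) / \<beta> * Beta a b
              * (\<tau> / (1 + \<tau>)) * (1 / \<beta> * (Digamma b - Digamma a) + 1)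
       \<and> K i n \<alpha> \<tau> \<beta> = J i n \<alpha> (2 * \<tau>) \<beta> - (xi i n \<alpha> \<tau> \<beta>)\<^sup>2"
proof -
  have b_eq: "b = real i * (\<tau> + 1) - \<tau> / \<beta>"
    using assms(5,9) by (simp add: field_simps)
  have a_eq: "a = (real n + 1 - real i) * (\<tau> + 1) + \<tau> / \<beta>"
    using assms(3,5,8) by (simp add: field_simps)
  have "real i * \<tau> * \<beta> + real i * \<beta> - \<tau> > 0"
    using assms(7) by (simp add: algebra_simps)
  with assms(5,9) have "b > 0" by simp
  have "a > 0"
    using assms(3,5,6) a_eq by (simp add: add_pos_nonneg)
  have "b + a = real (n + 1) * (\<tau> + 1)"
    using a_eq b_eq by (simp add: algebra_simps)
  then have "Beta b a * (1 - real (n + 1) / (b + a)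
        + (real i - real (n + 1) * b / (b + a)) * (Digamma b - Digamma a))
      = Beta a b * (\<tau> / (1 + \<tau>)) * (1 / \<beta> * (Digamma b - Digamma a) + 1)"
    by (rule Beta_logit_weights_eq[OF assms(5,6) _ _ b_eq]) simp
  with has_integral_score_fos_powr[OF assms(4,5) \<open>a > 0\<close> \<open>b > 0\<close> a_eq b_eq]
  have "((\<lambda>x. score i n \<alpha> \<beta> x * fos i n \<alpha> \<beta> x powr (\<tau> + 1)) has_integral
      (\<beta> / \<alpha>) powr \<tau> * cc i n powr (\<tau> + 1) / \<beta> * Beta a b * (\<tau> / (1 + \<tau>))
        * (1 / \<beta> * (Digamma b - Digamma a) + 1)) {0<..}"
    by (simp only: mult.assoc)
  with integral_unique[OF this] show ?thesis
    unfolding xi_def K_def by blast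
qed

end
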